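(* Let $R$ be a commutative domain, $B=R(t,\sigma,H,J)$, $M$ an $R$-weight $B$-module, and $\mathfrak m\in\operatorname{Maxspec}(R)$ with $\sigma(\mathfrak m)\notin\mathcal S(B)$. Then: (1) for all $j\in J\setminus\sigma(\mathfrak m)$ and $h\in H\setminus\sigma(\mathfrak m)$, the $R/\mathfrak m$-linear maps $M_{\mathfrak m}\to M_{\sigma(\mathfrak m)}$, $v\mapsto (jt)v$, and $M_{\sigma(\mathfrak m)}\to M_{\mathfrak m}$, $v\mapsto(\sigma^{-1}(h)t^{-1})v$, are injective; (2) $\dim_{R/\mathfrak m}M_{\mathfrak m}=\dim_{R/\sigma(\mathfrak m)}M_{\sigma(\mathfrak m)}$.
   Context: $\Bbbk$ is a field; all algebras are associative unital $\Bbbk$-algebras. For an algebra $R$ and $\sigma\in\operatorname{Aut}_\Bbbk(R)$, $R[t,t^{-1};\sigma]$ is the skew Laurent ring: generated over $R$ by $t,t^{-1}$ with $tt^{-1}=t^{-1}t=1$ and $t^{\pm1}r=\sigma^{\pm1}(r)t^{\pm1}$ for $r\in R$. Given two-sided ideals $H,J$ of $R$, set $I^{(0)}=R$, $I^{(n)}=J\sigma(J)\cdots\sigma^{n-1}(J)$ for $n\ge1$, and $I^{(n)}=\sigma^{-1}(H)\sigma^{-2}(H)\cdots\sigma^{n}(H)$ for $n\le-1$; it is assumed throughout that $I^{(n)}\neq0$ for all $n\in\mathbb Z$. The Bell–Rogalski (BR) algebra is $R(t,\sigma,H,J)=\bigoplus_{n\in\mathbb Z}I^{(n)}t^n\subseteq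 R[t,t^{-1};\sigma]$; write $B_n=I^{(n)}t^n$. For $R$ commutative, $\mathcal S(B)=\{\mathfrak p\in\operatorname{Spec}(R):\mathfrak p\supseteq HJ\}$. For $R$ a commutative domain, a left $B$-module $M$ is an $R$-weight module if $M=\bigoplus_{\mathfrak m\in\operatorname{Maxspec}(R)}M_{\mathfrak m}$ where $M_{\mathfrak m}=\{v\in M:\mathfrak m v=0\}$ and $\dim_{R/\mathfrak m}M_{\mathfrak m}<\infty$ for all $\mathfrak m$. Note $B_k M_{\mathfrak m}\subseteq M_{\sigma^k(\mathfrak m)}$; $M_{\sigma(\mathfrak m)}$ is regarded as an $R/\mathfrak m$-vector space via the field isomorphism $R/\mathfrak m\to R/\sigma(\mathfrak m)$ induced by $\sigma$. *)

theory Defs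
  imports Main
begin

definition is_ideal :: "('r::idom) set \<Rightarrow> bool" where
  "is_ideal I \<longleftrightarrow> 0 \<in> I \<and> (\<forall>a\<in>I. \<forall>b\<in>I. a + b \<in> I) \<and> (\<forall>r. \<forall>a\<in>I. r * a \<in> I)"

definition is_prime_ideal :: "('r::idom) set \<Rightarrow> bool" where
  "is_prime_ideal P \<longleftrightarrow> is_ideal P \<and> P \<noteq> UNIV \<and> (\<forall>a b. a * b \<in> P \<longrightarrow> a \<in> P \<or> b \<in> P)"

definition is_max_ideal :: "('r::idom) set \<Rightarrow> bool" where
  "is_max_ideal P \<longleftrightarrow> is_ideal P \<and> P \<noteq> UNIV \<and>
     (\<forall>I. is_ideal I \<and> P \<subseteq> I \<longrightarrow> I = P \<or> I = UNIV)"

definition ideal_prod :: "('r::idom) set \<Rightarrow> 'r set \<Rightarrow> 'r set" where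
  "ideal_prod A B = {(\<Sum>i<(k::nat). a i * b i) | k a b. \<forall>i<k. a i \<in> A \<and> b i \<in> B}"

definition is_ring_aut :: "('r::idom \<Rightarrow> 'r) \<Rightarrow> bool" where
  "is_ring_aut \<sigma> \<longleftrightarrow> bij \<sigma> \<and> (\<forall>a b. \<sigma> (a + b) = \<sigma> a + \<sigma> b) \<and>
     (\<forall>a b. \<sigma> (a * b) = \<sigma> a * \<sigma> b) \<and> \<sigma> 1 = 1"

definition spow :: "('r \<Rightarrow> 'r) \<Rightarrow> int \<Rightarrow> 'r \<Rightarrow> 'r" where
  "spow \<sigma> k = (if 0 \<le> k then \<sigma> ^^ nat k else (inv \<sigma>) ^^ nat (- k))"

text \<open>An element \<open>\<Sum> f n t^n\<close> is represented by its finitely supported coefficient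
  function \<open>f :: int \<Rightarrow> 'r\<close>; multiplication uses \<open>t^k r = \<sigma>^k(r) t^k\<close>.\<close>

definition skew_mult :: "('r::idom \<Rightarrow> 'r) \<Rightarrow> (int \<Rightarrow> 'r) \<Rightarrow> (int \<Rightarrow> 'r) \<Rightarrow> int \<Rightarrow> 'r" where
  "skew_mult \<sigma> f g n = (\<Sum>k\<in>{k. f k \<noteq> 0}. f k * spow \<sigma> k (g (n - k)))"

definition tmono :: "'r::zero \<Rightarrow> int \<Rightarrow> int \<Rightarrow> 'r" where
  "tmono a n = (\<lambda>k. if k = n then a else 0)"

fun Ipos :: "('r::idom \<Rightarrow> 'r) \<Rightarrow> 'r set \<Rightarrow> nat \<Rightarrow> 'r set" where
  "Ipos \<sigma> J 0 = UNIV"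
| "Ipos \<sigma> J (Suc n) = (if n = 0 then J else ideal_prod (Ipos \<sigma> J n) ((\<sigma> ^^ n) ` J))"

fun Ineg :: "('r::idom \<Rightarrow> 'r) \<Rightarrow> 'r set \<Rightarrow> nat \<Rightarrow> 'r set" where
  "Ineg \<sigma> H 0 = UNIV"
| "Ineg \<sigma> H (Suc n) = (if n = 0 then inv \<sigma> ` H
     else ideal_prod (Ineg \<sigma> H n) ((inv \<sigma> ^^ Suc n) ` H))"

text \<open>\<open>I^(n)\<close>: \<open>R\<close> for \<open>n=0\<close>, \<open>J \<sigma>(J)\<cdots>\<sigma>^(n-1)(J)\<close> for \<open>n\<ge>1\<close>,
  \<open>\<sigma>^-1(H)\<cdots>\<sigma>^n(H)\<close> for \<open>n\<le>-1\<close>.\<close>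
definition Iseq :: "('r::idom \<Rightarrow> 'r) \<Rightarrow> 'r set \<Rightarrow> 'r set \<Rightarrow> int \<Rightarrow> 'r set" where
  "Iseq \<sigma> H J n = (if 0 \<le> n then Ipos \<sigma> J (nat n) else Ineg \<sigma> H (nat (- n)))"

definition BR_alg :: "('r::idom \<Rightarrow> 'r) \<Rightarrow> 'r set \<Rightarrow> 'r set \<Rightarrow> (int \<Rightarrow> 'r) set" where
  "BR_alg \<sigma> H J = {f. finite {n. f n \<noteq> 0} \<and> (\<forall>n. f n \<in> Iseq \<sigma> H J n)}"

definition SB :: "('r::idom) set \<Rightarrow> 'r set \<Rightarrow> 'r set set" where
  "SB H J = {p. is_prime_ideal p \<and> ideal_prod H J \<subseteq> p}"

text \<open>\<open>act b v\<close> is the action of \<open>b \<in> B\<close> on \<open>v\<close>; only its values on \<open>B\<close> matter.\<close>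
definition is_B_module :: "('r::idom \<Rightarrow> 'r) \<Rightarrow> 'r set \<Rightarrow> 'r set \<Rightarrow>
    ((int \<Rightarrow> 'r) \<Rightarrow> 'm::ab_group_add \<Rightarrow> 'm) \<Rightarrow> bool" where
  "is_B_module \<sigma> H J act \<longleftrightarrow>
     (\<forall>f\<in>BR_alg \<sigma> H J. \<forall>g\<in>BR_alg \<sigma> H J. \<forall>v. act (\<lambda>n. f n + g n) v = act f v + act g v) \<and>
     (\<forall>f\<in>BR_alg \<sigma> H J. \<forall>v w. act f (v + w) = act f v + act f w) \<and>
     (\<forall>f\<in>BR_alg \<sigma> H J. \<forall>g\<in>BR_alg \<sigma> H J. \<forall>v. act (skew_mult \<sigma> f g) v = act f (act g v)) \<and>
     (\<forall>v. act (tmono 1 0) v = v)"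

definition ract :: "((int \<Rightarrow> 'r::idom) \<Rightarrow> 'm \<Rightarrow> 'm) \<Rightarrow> 'r \<Rightarrow> 'm \<Rightarrow> 'm" where
  "ract act r v = act (tmono r 0) v"

definition wspace :: "((int \<Rightarrow> 'r::idom) \<Rightarrow> 'm::ab_group_add \<Rightarrow> 'm) \<Rightarrow> 'r set \<Rightarrow> 'm set" where
  "wspace act P = {v. \<forall>r\<in>P. ract act r v = 0}"

text \<open>The \<open>R/m\<close>-structure on \<open>V \<subseteq> M_m\<close> is induced by the \<open>R\<close>-action; a finite
  \<open>S\<close> is \<open>R/m\<close>-linearly independent iff every \<open>R\<close>-relation has all coefficients in \<open>m\<close>.\<close>
definition res_indep :: "((int \<Rightarrow> 'r::idom) \<Rightarrow> 'm::ab_group_add \<Rightarrow> 'm) \<Rightarrow> 'r set \<Rightarrow> 'm set \<Rightarrow> bool" where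
  "res_indep act P S \<longleftrightarrow> (\<forall>c. (\<Sum>s\<in>S. ract act (c s) s) = 0 \<longrightarrow> (\<forall>s\<in>S. c s \<in> P))"

definition res_span :: "((int \<Rightarrow> 'r::idom) \<Rightarrow> 'm::ab_group_add \<Rightarrow> 'm) \<Rightarrow> 'm set \<Rightarrow> 'm set" where
  "res_span act S = {(\<Sum>s\<in>S. ract act (c s) s) | c. True}"

definition res_basis :: "((int \<Rightarrow> 'r::idom) \<Rightarrow> 'm::ab_group_add \<Rightarrow> 'm) \<Rightarrow> 'r set \<Rightarrow> 'm set \<Rightarrow> 'm set \<Rightarrow> bool" where
  "res_basis act P V S \<longleftrightarrow> finite S \<and> S \<subseteq> V \<and> res_indep act P S \<and> V \<subseteq> res_span act S"

definition res_fin_dim :: "((int \<Rightarrow> 'r::idom) \<Rightarrow> 'm::ab_group_add \<Rightarrow> 'm) \<Rightarrow> 'r set \<Rightarrow> 'm set \<Rightarrow> bool" where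
  "res_fin_dim act P V \<longleftrightarrow> (\<exists>S. res_basis act P V S)"

definition res_dim :: "((int \<Rightarrow> 'r::idom) \<Rightarrow> 'm::ab_group_add \<Rightarrow> 'm) \<Rightarrow> 'r set \<Rightarrow> 'm set \<Rightarrow> nat" where
  "res_dim act P V = card (SOME S. res_basis act P V S)"

definition is_weight_module :: "((int \<Rightarrow> 'r::idom) \<Rightarrow> 'm::ab_group_add \<Rightarrow> 'm) \<Rightarrow> bool" where
  "is_weight_module act \<longleftrightarrow>
     (\<forall>v. \<exists>F w. finite F \<and> (\<forall>P\<in>F. is_max_ideal P \<and> w P \<in> wspace act P) \<and> v = (\<Sum>P\<in>F. w P)) \<and>
     (\<forall>F w. finite F \<and> (\<forall>P\<in>F. is_max_ideal P \<and> w P \<in> wspace act P) \<and> (\<Sum>P\<in>F. w P) = 0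
        \<longrightarrow> (\<forall>P\<in>F. w P = 0)) \<and>
     (\<forall>P. is_max_ideal P \<longrightarrow> res_fin_dim act P (wspace act P))"

end

theory Submission
  imports Defs "HOL.Modules"
begin

text \<open>Since \<open>\<sigma>(m)\<close> is a prime ideal not containing \<open>HJ\<close>, there are \<open>h \<in> H\<close> and
  \<open>j \<in> J\<close> with \<open>hj \<notin> \<sigma>(m)\<close>. The composites \<open>(\<sigma>\<^sup>-\<^sup>1(h)t\<^sup>-\<^sup>1)(jt)\<close> and
  \<open>(jt)(\<sigma>\<^sup>-\<^sup>1(h)t\<^sup>-\<^sup>1)\<close> lie in \<open>B\<^sub>0 = R\<close> and act on \<open>M\<^sub>m\<close>, resp. \<open>M\<^sub>\<sigma>\<^sub>(\<^sub>m\<^sub>)\<close>,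
  as multiplication by units modulo \<open>m\<close>, resp. \<open>\<sigma>(m)\<close>; hence \<open>jt\<close> and \<open>\<sigma>\<^sup>-\<^sup>1(h)t\<^sup>-\<^sup>1\<close>
  are injective on these weight spaces. Being semilinear along \<open>\<sigma>\<close> and \<open>\<sigma>\<^sup>-\<^sup>1\<close>, each of
  them carries a family that is independent over the residue field to an independent family,
  and the Steinitz exchange lemma gives both dimension inequalities.\<close>

lemma ideal_zero: "is_ideal I \<Longrightarrow> 0 \<in> I"
  by (simp add: is_ideal_def)

lemma ideal_add: "is_ideal I \<Longrightarrow> a \<in> I \<Longrightarrow> b \<in> I \<Longrightarrow> a + b \<in> I"
  by (simp add: is_ideal_def)

lemma ideal_mult_left: "is_ideal I \<Longrightarrow> a \<in> I \<Longrightarrow> r * a \<in> I"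
  by (simp add: is_ideal_def)

lemma ideal_mult_right: "is_ideal I \<Longrightarrow> a \<in> I \<Longrightarrow> a * r \<in> I"
  by (metis ideal_mult_left mult.commute)

lemma ideal_uminus: "is_ideal I \<Longrightarrow> a \<in> I \<Longrightarrow> - a \<in> I"
  by (metis ideal_mult_left mult_minus1)

lemma ideal_diff: "is_ideal I \<Longrightarrow> a \<in> I \<Longrightarrow> b \<in> I \<Longrightarrow> a - b \<in> I"
  by (metis ideal_add ideal_uminus diff_conv_add_uminus)

lemma ideal_sum: "is_ideal I \<Longrightarrow> (\<forall>i\<in>A. f i \<in> I) \<Longrightarrow> sum f A \<in> I"
  by (induction A rule: infinite_finite_induct) (auto intro: ideal_add ideal_zero)

lemma one_notin_ideal: "is_ideal I \<Longrightarrow> I \<noteq> UNIV \<Longrightarrow> 1 \<notin> I"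
  by (metis UNIV_eq_I ideal_mult_right mult_1)

lemma max_ideal_inverse_mod:
  assumes P: "is_max_ideal P" and a: "a \<notin> P"
  shows "\<exists>b. b * a - 1 \<in> P"
proof -
  have iP: "is_ideal P" using P by (simp add: is_max_ideal_def)
  define I where "I = {x + r * a | x r. x \<in> P}"
  have "is_ideal I" unfolding is_ideal_def I_def
  proof (intro conjI ballI allI)
    show "0 \<in> {x + r * a |x r. x \<in> P}" using ideal_zero[OF iP] by force
  next
    fix u v assume "u \<in> {x + r * a |x r. x \<in> P}" "v \<in> {x + r * a |x r. x \<in> P}"
    then obtain x r y s where "u = x + r * a" "v = y + s * a" "x \<in> P" "y \<in> P" by blast
    then show "u + v \<in> {x + r * a |x r. x \<in> P}"
      by (intro CollectI exI[of _ "x + y"] exI[of _ "r + s"])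
        (auto simp: algebra_simps intro: ideal_add[OF iP])
  next
    fix q u assume "u \<in> {x + r * a |x r. x \<in> P}"
    then obtain x r where "u = x + r * a" "x \<in> P" by blast
    then show "q * u \<in> {x + r * a |x r. x \<in> P}"
      by (intro CollectI exI[of _ "q * x"] exI[of _ "q * r"])
        (auto simp: algebra_simps intro: ideal_mult_left[OF iP])
  qed
  moreover have "P \<subseteq> I" "a \<in> I" unfolding I_def using ideal_zero[OF iP] by force+
  ultimately have "I = UNIV" using P a unfolding is_max_ideal_def by blast
  then obtain x r where "1 = x + r * a" "x \<in> P" unfolding I_def by blast
  then have "r * a - 1 = - x" "- x \<in> P" by (simp_all add: algebra_simps ideal_uminus[OF iP])
  then show ?thesis by metis
qed

lemma max_ideal_is_prime:
  assumes P: "is_max_ideal P"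
  shows "is_prime_ideal P"
proof -
  have iP: "is_ideal P" using P by (simp add: is_max_ideal_def)
  have "b \<in> P" if ab: "a * b \<in> P" and a: "a \<notin> P" for a b
  proof -
    obtain c where c: "c * a - 1 \<in> P" using max_ideal_inverse_mod[OF P a] by blast
    have "b = c * (a * b) - b * (c * a - 1)" by (simp add: algebra_simps)
    then show ?thesis using ideal_diff[OF iP ideal_mult_left[OF iP ab] ideal_mult_left[OF iP c]] by metis
  qed
  then show ?thesis using P by (auto simp: is_prime_ideal_def is_max_ideal_def)
qed

lemma prime_ideal_mult_notin:
  "is_prime_ideal P \<Longrightarrow> a \<notin> P \<Longrightarrow> b \<notin> P \<Longrightarrow> a * b \<notin> P"
  by (auto simp: is_prime_ideal_def)

lemma prime_ideal_notin_SB: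
  assumes p: "is_prime_ideal p" and notS: "p \<notin> SB H J"
  obtains h j where "h \<in> H" "j \<in> J" "h * j \<notin> p"
proof -
  have ip: "is_ideal p" using p by (simp add: is_prime_ideal_def)
  obtain z where "z \<in> ideal_prod H J" "z \<notin> p" using p notS by (auto simp: SB_def)
  then obtain k a b where z: "z = (\<Sum>i<(k::nat). a i * b i)" "\<forall>i<k. a i \<in> H \<and> b i \<in> J"
    unfolding ideal_prod_def by blast
  then obtain i where "i < k" "a i * b i \<notin> p"
    using \<open>z \<notin> p\<close> ideal_sum[OF ip, of "{..<k}" "\<lambda>i. a i * b i"] by auto
  then show ?thesis using that z(2) by blast
qed

lemma ring_aut_bij: "is_ring_aut \<sigma> \<Longrightarrow> bij \<sigma>"
  by (simp add: is_ring_aut_def)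

lemma ring_aut_add: "is_ring_aut \<sigma> \<Longrightarrow> \<sigma> (a + b) = \<sigma> a + \<sigma> b"
  by (simp add: is_ring_aut_def)

lemma ring_aut_mult: "is_ring_aut \<sigma> \<Longrightarrow> \<sigma> (a * b) = \<sigma> a * \<sigma> b"
  by (simp add: is_ring_aut_def)

lemma ring_aut_zero: "is_ring_aut \<sigma> \<Longrightarrow> \<sigma> 0 = 0"
  by (metis add_cancel_right_right add_0 ring_aut_add)

lemma ring_aut_apply_inv: "is_ring_aut \<sigma> \<Longrightarrow> \<sigma> (inv \<sigma> x) = x"
  by (simp add: ring_aut_bij bij_is_surj surj_f_inv_f)

lemma ring_aut_inv_apply: "is_ring_aut \<sigma> \<Longrightarrow> inv \<sigma> (\<sigma> x) = x"
  by (simp add: ring_aut_bij bij_is_inj)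

lemma ring_aut_inv:
  assumes s: "is_ring_aut \<sigma>"
  shows "is_ring_aut (inv \<sigma>)"
proof -
  have "inv \<sigma> (a + b) = inv \<sigma> a + inv \<sigma> b" for a b
  proof -
    have "\<sigma> (inv \<sigma> a + inv \<sigma> b) = a + b" using s by (simp add: ring_aut_add ring_aut_apply_inv)
    then show ?thesis using ring_aut_inv_apply[OF s] by metis
  qed
  moreover have "inv \<sigma> (a * b) = inv \<sigma> a * inv \<sigma> b" for a b
  proof -
    have "\<sigma> (inv \<sigma> a * inv \<sigma> b) = a * b" using s by (simp add: ring_aut_mult ring_aut_apply_inv)
    then show ?thesis using ring_aut_inv_apply[OF s] by metis
  qed
  moreover have "inv \<sigma> 1 = 1"
    using s ring_aut_inv_apply[OF s, of 1] by (simp add: is_ring_aut_def)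
  ultimately show ?thesis
    using s by (simp add: is_ring_aut_def bij_imp_bij_inv)
qed

lemma ring_aut_image_ideal:
  assumes s: "is_ring_aut \<sigma>" and I: "is_ideal I"
  shows "is_ideal (\<sigma> ` I)"
  unfolding is_ideal_def
proof (intro conjI ballI allI)
  show "0 \<in> \<sigma> ` I" using ideal_zero[OF I] ring_aut_zero[OF s] by force
next
  fix a b assume "a \<in> \<sigma> ` I" "b \<in> \<sigma> ` I"
  then obtain x y where "x \<in> I" "y \<in> I" "a = \<sigma> x" "b = \<sigma> y" by blast
  then show "a + b \<in> \<sigma> ` I" using ideal_add[OF I] ring_aut_add[OF s] by (metis image_eqI)
next
  fix r a assume "a \<in> \<sigma> ` I"
  then obtain x where x: "x \<in> I" "a = \<sigma> x" by blast
  have "r * a = \<sigma> (inv \<sigma> r * x)" using x s by (simp add: ring_aut_mult ring_aut_apply_inv)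
  then show "r * a \<in> \<sigma> ` I" using ideal_mult_left[OF I x(1)] by blast
qed

lemma ring_aut_image_max_ideal:
  assumes s: "is_ring_aut \<sigma>" and P: "is_max_ideal P"
  shows "is_max_ideal (\<sigma> ` P)"
proof -
  have iP: "is_ideal P" and nU: "P \<noteq> UNIV" using P by (auto simp: is_max_ideal_def)
  have "\<sigma> ` P \<noteq> UNIV"
    using nU s by (metis ring_aut_bij bij_is_inj inj_image_eq_iff bij_is_surj)
  moreover have "I = \<sigma> ` P \<or> I = UNIV" if I: "is_ideal I" "\<sigma> ` P \<subseteq> I" for I
  proof -
    have "is_ideal (inv \<sigma> ` I)" by (rule ring_aut_image_ideal[OF ring_aut_inv[OF s] I(1)])
    moreover have "P \<subseteq> inv \<sigma> ` I"
      using I(2) s by (metis image_mono image_inv_f_f ring_aut_bij bij_is_inj)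
    ultimately have "inv \<sigma> ` I = P \<or> inv \<sigma> ` I = UNIV" using P by (simp add: is_max_ideal_def)
    moreover have "\<sigma> ` inv \<sigma> ` I = I" "\<sigma> ` UNIV = UNIV"
      using s by (simp_all add: image_image ring_aut_apply_inv ring_aut_bij bij_is_surj)
    ultimately show ?thesis by force
  qed
  ultimately show ?thesis using ring_aut_image_ideal[OF s iP] by (simp add: is_max_ideal_def)
qed

section \<open>Linear algebra over the residue field\<close>

definition indep_mod :: "('r \<Rightarrow> 'm \<Rightarrow> 'm::ab_group_add) \<Rightarrow> 'r set \<Rightarrow> 'i set \<Rightarrow> ('i \<Rightarrow> 'm) \<Rightarrow> bool" where
  "indep_mod sm P A x \<longleftrightarrow> (\<forall>d. (\<Sum>a\<in>A. sm (d a) (x a)) = 0 \<longrightarrow> (\<forall>a\<in>A. d a \<in> P))"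

lemma indep_mod_eliminate:
  fixes sm :: "'r::idom \<Rightarrow> 'm::ab_group_add \<Rightarrow> 'm"
  assumes "module sm" and A: "finite A" "a0 \<in> A" and indep: "indep_mod sm P A x"
  shows "indep_mod sm P (A - {a0}) (\<lambda>a. x a - sm (c a) (x a0))"
  unfolding indep_mod_def
proof (intro allI impI)
  interpret module sm by fact
  fix d assume d: "(\<Sum>a\<in>A - {a0}. sm (d a) (x a - sm (c a) (x a0))) = 0"
  define e where "e a = (if a = a0 then - (\<Sum>a\<in>A - {a0}. d a * c a) else d a)" for a
  have "(\<Sum>a\<in>A. sm (e a) (x a)) = sm (e a0) (x a0) + (\<Sum>a\<in>A - {a0}. sm (d a) (x a))"
    using A by (simp add: sum.remove e_def)
  also have "\<dots> = (\<Sum>a\<in>A - {a0}. sm (d a) (x a - sm (c a) (x a0)))"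
    by (simp add: e_def scale_right_diff_distrib sum_subtractf scale_sum_left)
  finally have "\<forall>a\<in>A. e a \<in> P" using d indep by (simp add: indep_mod_def)
  then show "\<forall>a\<in>A - {a0}. d a \<in> P" unfolding e_def by (metis DiffD1 DiffD2 singletonI)
qed

text \<open>The Steinitz exchange lemma over the residue field \<open>R/P\<close>, phrased inside the
  \<open>R\<close>-module: the spanning vectors \<open>T\<close> are annihilated by \<open>P\<close>.\<close>

lemma indep_mod_card_le:
  fixes sm :: "'r::idom \<Rightarrow> 'm::ab_group_add \<Rightarrow> 'm"
  assumes md: "module sm" and P: "is_max_ideal P"
  shows "finite T \<Longrightarrow> (\<forall>u\<in>T. \<forall>r\<in>P. sm r u = 0) \<Longrightarrow> finite A \<Longrightarrow> indep_mod sm P A x \<Longrightarrow>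
    (\<forall>a\<in>A. \<exists>c. x a = (\<Sum>u\<in>T. sm (c u) u)) \<Longrightarrow> card A \<le> card T"
proof (induction T arbitrary: A x rule: finite_induct)
  case empty
  interpret module sm by (rule md)
  have "(\<Sum>a\<in>A. sm 1 (x a)) = 0" using empty.prems(4) by simp
  then have "\<forall>a\<in>A. 1 \<in> P" using empty.prems(3)[unfolded indep_mod_def, rule_format, of "\<lambda>_. 1"] by blast
  then show ?case using P one_notin_ideal[of P] by (auto simp: is_max_ideal_def)
next
  case (insert t T)
  interpret module sm by (rule md)
  from insert.prems(4) obtain C where "\<forall>a\<in>A. x a = (\<Sum>u\<in>insert t T. sm (C a u) u)"
    by metis
  then have C: "\<forall>a\<in>A. x a = sm (C a t) t + (\<Sum>u\<in>T. sm (C a u) u)"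
    using insert.hyps by simp
  have tP: "sm r t = 0" if "r \<in> P" for r using insert.prems(1) that by auto
  show ?case
  proof (cases "\<forall>a\<in>A. C a t \<in> P")
    case True
    then have "\<forall>a\<in>A. \<exists>c. x a = (\<Sum>u\<in>T. sm (c u) u)" using C tP by auto
    then have "card A \<le> card T" using insert.IH[of A x] insert.prems by blast
    then show ?thesis using insert.hyps by simp
  next
    case False
    then obtain a0 where a0: "a0 \<in> A" "C a0 t \<notin> P" by blast
    obtain b where b: "b * C a0 t - 1 \<in> P" using max_ideal_inverse_mod[OF P a0(2)] by blast
    have iP: "is_ideal P" using P by (simp add: is_max_ideal_def)
    define y where "y a = x a - sm (C a t * b) (x a0)" for a
    \<comment> \<open>subtracting a multiple of \<open>x a0\<close> removes the \<open>t\<close>-coordinate modulo \<open>P\<close>\<close>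
    have "\<exists>c. y a = (\<Sum>u\<in>T. sm (c u) u)" if a: "a \<in> A" for a
    proof -
      have "C a t - C a t * b * C a0 t = - (C a t * (b * C a0 t - 1))" by (simp add: algebra_simps)
      then have t_coord: "sm (C a t - C a t * b * C a0 t) t = 0"
        using tP ideal_uminus[OF iP ideal_mult_left[OF iP b]] by metis
      have "y a = sm (C a t) t + (\<Sum>u\<in>T. sm (C a u) u)
          - sm (C a t * b) (sm (C a0 t) t + (\<Sum>u\<in>T. sm (C a0 u) u))"
        unfolding y_def using C a a0(1) by simp
      also have "\<dots> = sm (C a t - C a t * b * C a0 t) t + (\<Sum>u\<in>T. sm (C a u - C a t * b * C a0 u) u)"
        by (simp add: scale_right_distrib scale_left_diff_distrib scale_sum_right sum_subtractf algebra_simps)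
      also have "\<dots> = (\<Sum>u\<in>T. sm (C a u - C a t * b * C a0 u) u)"
        using t_coord by simp
      finally show ?thesis by (rule exI[of _ "\<lambda>u. C a u - C a t * b * C a0 u"])
    qed
    moreover have "indep_mod sm P (A - {a0}) y"
      unfolding y_def using insert.prems(2) a0(1) insert.prems(3) by (rule indep_mod_eliminate[OF md])
    ultimately have "card (A - {a0}) \<le> card T"
      using insert.IH[of "A - {a0}" y] insert.prems(1,2) by simp
    then show ?thesis using insert.hyps insert.prems(2) a0(1) by (simp add: card_Diff_singleton)
  qed
qed

lemma res_fin_dim_some_basis:
  "res_fin_dim act P V \<Longrightarrow> res_basis act P V (SOME S. res_basis act P V S)"
  unfolding res_fin_dim_def by (rule someI_ex)

section \<open>Weight spaces\<close>

lemma wspace_zero: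
  assumes "module (ract act)"
  shows "0 \<in> wspace act P"
proof -
  interpret module "ract act" by fact
  show ?thesis by (simp add: wspace_def)
qed

lemma wspace_scale:
  assumes "module (ract act)" and v: "v \<in> wspace act P"
  shows "ract act r v \<in> wspace act P"
proof -
  interpret module "ract act" by fact
  show ?thesis unfolding wspace_def
  proof (intro CollectI ballI)
    fix p assume "p \<in> P"
    then have "ract act p v = 0" using v by (simp add: wspace_def)
    then show "ract act p (ract act r v) = 0" by (metis scale_left_commute scale_zero_right)
  qed
qed

lemma wspace_diff:
  assumes "module (ract act)" and "v \<in> wspace act P" "w \<in> wspace act P"
  shows "v - w \<in> wspace act P"
proof -
  interpret module "ract act" by fact
  show ?thesis using assms(2,3) by (simp add: wspace_def scale_right_diff_distrib)
qed

lemma wspace_sum: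
  assumes "module (ract act)" and "\<forall>i\<in>A. f i \<in> wspace act P"
  shows "sum f A \<in> wspace act P"
proof -
  interpret module "ract act" by fact
  show ?thesis using assms(2) by (simp add: wspace_def scale_sum_right)
qed

lemma wspace_eq_zero_if_scale_eq_zero:
  assumes "module (ract act)" and P: "is_max_ideal P" and a: "a \<notin> P"
    and v: "v \<in> wspace act P" and av: "ract act a v = 0"
  shows "v = 0"
proof -
  interpret module "ract act" by fact
  obtain b where "b * a - 1 \<in> P" using max_ideal_inverse_mod[OF P a] by blast
  then have "ract act (b * a - 1) v = 0" using v by (simp add: wspace_def)
  moreover have "ract act (b * a) v = 0" using av by (metis scale_scale scale_zero_right)
  ultimately show ?thesis by (simp add: scale_left_diff_distrib)
qed

lemma inj_on_wspace_if_comp_eq_scale: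
  assumes md: "module (ract act)" and P: "is_max_ideal P" and a: "a \<notin> P"
    and comp: "\<forall>v\<in>wspace act P. g (f v) = ract act a v"
  shows "inj_on f (wspace act P)"
proof (rule inj_onI)
  interpret module "ract act" by fact
  fix v w assume v: "v \<in> wspace act P" and w: "w \<in> wspace act P" and "f v = f w"
  then have "ract act a v = ract act a w" using comp by metis
  then have "ract act a (v - w) = 0" by (simp add: scale_right_diff_distrib)
  then have "v - w = 0" by (rule wspace_eq_zero_if_scale_eq_zero[OF md P a wspace_diff[OF md v w]])
  then show "v = w" by simp
qed

lemma res_basis_card_le_if_semilinear_inj:
  assumes md: "module (ract act)" and Q: "is_max_ideal Q"
    and bS: "res_basis act P (wspace act P) S"
    and bT: "res_basis act Q (wspace act Q) T"
    and "additive f"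
    and maps: "f ` wspace act P \<subseteq> wspace act Q"
    and inj: "inj_on f (wspace act P)"
    and semilinear: "\<forall>r. \<forall>v\<in>wspace act P. f (ract act r v) = ract act (\<tau> r) (f v)"
    and \<tau>: "surj \<tau>" "\<tau> ` P \<subseteq> Q"
  shows "card S \<le> card T"
proof -
  interpret module "ract act" by fact
  interpret additive f by fact
  have S: "finite S" "S \<subseteq> wspace act P" "res_indep act P S"
    using bS by (auto simp: res_basis_def)
  have T: "finite T" "T \<subseteq> wspace act Q" "wspace act Q \<subseteq> res_span act T"
    using bT by (auto simp: res_basis_def)
  have "\<forall>u\<in>T. \<forall>r\<in>Q. ract act r u = 0"
    using T(2) by (auto simp: wspace_def)
  moreover have "indep_mod (ract act) Q S f"
    unfolding indep_mod_def
  proof (intro allI impI)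
    fix d assume d: "(\<Sum>a\<in>S. ract act (d a) (f a)) = 0"
    define d' where "d' a = inv \<tau> (d a)" for a
    have d': "d a = \<tau> (d' a)" for a using \<tau>(1) by (simp add: d'_def surj_f_inv_f)
    define w where "w = (\<Sum>a\<in>S. ract act (d' a) a)"
    have w: "w \<in> wspace act P"
      unfolding w_def using S(2) by (intro wspace_sum[OF md] ballI wspace_scale[OF md]) auto
    have "f w = (\<Sum>a\<in>S. f (ract act (d' a) a))"
      unfolding w_def by (rule sum)
    also have "\<dots> = (\<Sum>a\<in>S. ract act (d a) (f a))"
      unfolding d' using S(2) semilinear by (intro sum.cong) auto
    finally have "f w = f 0" using d zero by simp
    then have "w = 0" using inj_onD[OF inj _ w wspace_zero[OF md]] by blast
    then have "\<forall>a\<in>S. d' a \<in> P"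
      using S(3)[unfolded res_indep_def, rule_format, of d'] by (simp add: w_def)
    then show "\<forall>a\<in>S. d a \<in> Q" using d' \<tau>(2) by blast
  qed
  moreover have "\<forall>a\<in>S. \<exists>c. f a = (\<Sum>u\<in>T. ract act (c u) u)"
  proof
    fix a assume "a \<in> S"
    then have "f a \<in> res_span act T" using S(2) maps T(3) by blast
    then show "\<exists>c. f a = (\<Sum>u\<in>T. ract act (c u) u)" by (auto simp: res_span_def)
  qed
  ultimately show ?thesis by (rule indep_mod_card_le[OF md Q T(1) _ S(1)])
qed

lemma funpow_fixes_zero: "(f :: 'a::zero \<Rightarrow> 'a) 0 = 0 \<Longrightarrow> (f ^^ n) 0 = 0"
  by (induction n) simp_all

lemma spow_ring_aut_zero: "is_ring_aut \<sigma> \<Longrightarrow> spow \<sigma> k 0 = 0"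
  by (simp add: spow_def funpow_fixes_zero ring_aut_zero ring_aut_inv)

lemma spow_0_1_neg1: "spow \<sigma> 0 = id" "spow \<sigma> 1 = \<sigma>" "spow \<sigma> (-1) = inv \<sigma>"
  by (auto simp: spow_def)

lemma skew_mult_tmono:
  assumes "is_ring_aut \<sigma>"
  shows "skew_mult \<sigma> (tmono a k) (tmono b l) = tmono (a * spow \<sigma> k b) (k + l)"
proof (rule ext)
  fix n
  show "skew_mult \<sigma> (tmono a k) (tmono b l) n = tmono (a * spow \<sigma> k b) (k + l) n"
  proof (cases "a = 0")
    case True
    then show ?thesis by (simp add: skew_mult_def tmono_def)
  next
    case False
    then have "{k'. tmono a k k' \<noteq> 0} = {k}" by (auto simp: tmono_def)
    then show ?thesis using spow_ring_aut_zero[OF assms] by (auto simp: skew_mult_def tmono_def)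
  qed
qed

lemma zero_mem_Iseq:
  assumes s: "is_ring_aut \<sigma>" and H: "is_ideal H" and J: "is_ideal J"
  shows "0 \<in> Iseq \<sigma> H J n"
proof -
  have "0 \<in> Ipos \<sigma> J k" for k
    by (cases k) (auto simp: ideal_zero[OF J] ideal_prod_def intro: exI[of _ 0])
  moreover have "0 \<in> Ineg \<sigma> H k" for k
  proof (cases k)
    case (Suc k')
    have "0 \<in> inv \<sigma> ` H"
      using ideal_zero[OF H] ring_aut_zero[OF ring_aut_inv[OF s]] by (metis image_eqI)
    then show ?thesis using Suc by (auto simp: ideal_prod_def intro: exI[of _ 0])
  qed simp
  ultimately show ?thesis by (simp add: Iseq_def)
qed

lemma tmono_mem_BR_alg:
  assumes "is_ring_aut \<sigma>" "is_ideal H" "is_ideal J" and a: "a \<in> Iseq \<sigma> H J k"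
  shows "tmono a k \<in> BR_alg \<sigma> H J"
proof -
  have "finite {n. tmono a k n \<noteq> 0}"
    by (rule finite_subset[of _ "{k}"]) (auto simp: tmono_def)
  then show ?thesis using a zero_mem_Iseq[OF assms(1-3)] by (auto simp: BR_alg_def tmono_def)
qed

lemma Iseq_0_1_neg1: "Iseq \<sigma> H J 0 = UNIV" "Iseq \<sigma> H J 1 = J" "Iseq \<sigma> H J (-1) = inv \<sigma> ` H"
  by (auto simp: Iseq_def)

section \<open>Modules over the Bell--Rogalski algebra\<close>

locale BR_module =
  fixes \<sigma> :: "'r::idom \<Rightarrow> 'r" and H J :: "'r set"
    and act :: "(int \<Rightarrow> 'r) \<Rightarrow> 'm::ab_group_add \<Rightarrow> 'm"
  assumes aut: "is_ring_aut \<sigma>" and H: "is_ideal H" and J: "is_ideal J"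
    and module: "is_B_module \<sigma> H J act"
begin

lemma tmono_J_mem: "j \<in> J \<Longrightarrow> tmono j 1 \<in> BR_alg \<sigma> H J"
  by (rule tmono_mem_BR_alg[OF aut H J]) (simp add: Iseq_0_1_neg1)

lemma tmono_H_mem: "h \<in> H \<Longrightarrow> tmono (inv \<sigma> h) (-1) \<in> BR_alg \<sigma> H J"
  by (rule tmono_mem_BR_alg[OF aut H J]) (simp add: Iseq_0_1_neg1)

lemma act_add_left:
  "f \<in> BR_alg \<sigma> H J \<Longrightarrow> g \<in> BR_alg \<sigma> H J \<Longrightarrow> act (\<lambda>n. f n + g n) v = act f v + act g v"
  using module by (simp add: is_B_module_def)

lemma additive_act: "f \<in> BR_alg \<sigma> H J \<Longrightarrow> additive (act f)"
  using module by (simp add: is_B_module_def additive_def)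

lemma act_tmono_act_tmono:
  assumes "a \<in> Iseq \<sigma> H J k" "b \<in> Iseq \<sigma> H J l"
  shows "act (tmono a k) (act (tmono b l) v) = act (tmono (a * spow \<sigma> k b) (k + l)) v"
  using module tmono_mem_BR_alg[OF aut H J assms(1)] tmono_mem_BR_alg[OF aut H J assms(2)]
  by (simp add: is_B_module_def skew_mult_tmono[OF aut, symmetric])

lemma module_ract: "module (ract act)"
proof
  fix a b :: 'r and x y :: 'm
  have T0: "tmono r 0 \<in> BR_alg \<sigma> H J" for r
    by (rule tmono_mem_BR_alg[OF aut H J]) (simp add: Iseq_0_1_neg1)
  show "ract act a (x + y) = ract act a x + ract act a y"
    using additive.add[OF additive_act[OF T0]] by (simp add: ract_def)
  have "(\<lambda>n. tmono a 0 n + tmono b 0 n) = tmono (a + b) 0" by (auto simp: tmono_def)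
  then show "ract act (a + b) x = ract act a x + ract act b x"
    using act_add_left[OF T0 T0, of a b x] by (simp add: ract_def)
  show "ract act a (ract act b x) = ract act (a * b) x"
    using act_tmono_act_tmono[of a 0 b 0 x] by (simp add: ract_def Iseq_0_1_neg1 spow_0_1_neg1)
  show "ract act 1 x = x"
    using module by (simp add: ract_def is_B_module_def)
qed

lemma act_J_ract:
  assumes "j \<in> J"
  shows "act (tmono j 1) (ract act r v) = ract act (\<sigma> r) (act (tmono j 1) v)"
  using act_tmono_act_tmono[of j 1 r 0 v] act_tmono_act_tmono[of "\<sigma> r" 0 j 1 v] assms
  by (simp add: ract_def Iseq_0_1_neg1 spow_0_1_neg1 mult.commute)

lemma act_H_ract:
  assumes "h \<in> H"
  shows "act (tmono (inv \<sigma> h) (-1)) (ract act r v) = ract act (inv \<sigma> r) (act (tmono (inv \<sigma> h) (-1)) v)"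
  using act_tmono_act_tmono[of "inv \<sigma> h" "-1" r 0 v] act_tmono_act_tmono[of "inv \<sigma> r" 0 "inv \<sigma> h" "-1" v] assms
  by (simp add: ract_def Iseq_0_1_neg1 spow_0_1_neg1 mult.commute)

lemma act_H_act_J:
  assumes "h \<in> H" "j \<in> J"
  shows "act (tmono (inv \<sigma> h) (-1)) (act (tmono j 1) v) = ract act (inv \<sigma> (h * j)) v"
  using act_tmono_act_tmono[of "inv \<sigma> h" "-1" j 1 v] assms
  by (simp add: ract_def Iseq_0_1_neg1 spow_0_1_neg1 ring_aut_mult[OF ring_aut_inv[OF aut]])

lemma act_J_act_H:
  assumes "h \<in> H" "j \<in> J"
  shows "act (tmono j 1) (act (tmono (inv \<sigma> h) (-1)) v) = ract act (j * h) v"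
  using act_tmono_act_tmono[of j 1 "inv \<sigma> h" "-1" v] assms
  by (simp add: ract_def Iseq_0_1_neg1 spow_0_1_neg1 ring_aut_apply_inv[OF aut])

lemma act_J_wspace:
  assumes j: "j \<in> J" and v: "v \<in> wspace act P"
  shows "act (tmono j 1) v \<in> wspace act (\<sigma> ` P)"
proof -
  have "ract act (\<sigma> p) (act (tmono j 1) v) = 0" if "p \<in> P" for p
    using act_J_ract[OF j, of p v] v that additive.zero[OF additive_act[OF tmono_J_mem[OF j]]]
    by (simp add: wspace_def)
  then show ?thesis by (auto simp: wspace_def)
qed

lemma act_H_wspace:
  assumes h: "h \<in> H" and v: "v \<in> wspace act (\<sigma> ` P)"
  shows "act (tmono (inv \<sigma> h) (-1)) v \<in> wspace act P"
proof -
  have "ract act p (act (tmono (inv \<sigma> h) (-1)) v) = 0" if "p \<in> P" for p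
    using act_H_ract[OF h, of "\<sigma> p" v] v that additive.zero[OF additive_act[OF tmono_H_mem[OF h]]]
    by (simp add: wspace_def ring_aut_inv_apply[OF aut])
  then show ?thesis by (auto simp: wspace_def)
qed

lemma inj_on_act_J:
  assumes P: "is_max_ideal P" and h: "h \<in> H" and j: "j \<in> J" and hj: "h * j \<notin> \<sigma> ` P"
  shows "inj_on (act (tmono j 1)) (wspace act P)"
proof (rule inj_on_wspace_if_comp_eq_scale[OF module_ract P])
  show "inv \<sigma> (h * j) \<notin> P"
    using hj ring_aut_apply_inv[OF aut] by (metis image_eqI)
  show "\<forall>v\<in>wspace act P. act (tmono (inv \<sigma> h) (-1)) (act (tmono j 1) v) = ract act (inv \<sigma> (h * j)) v"
    using act_H_act_J[OF h j] by blast
qed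

lemma inj_on_act_H:
  assumes Q: "is_max_ideal Q" and h: "h \<in> H" and j: "j \<in> J" and jh: "j * h \<notin> Q"
  shows "inj_on (act (tmono (inv \<sigma> h) (-1))) (wspace act Q)"
  by (rule inj_on_wspace_if_comp_eq_scale[OF module_ract Q jh, where g = "act (tmono j 1)"])
    (use act_J_act_H[OF h j] in blast)

lemma res_dim_eq_res_dim_shift:
  assumes weight: "is_weight_module act" and P: "is_max_ideal P"
    and h: "h \<in> H" and j: "j \<in> J" and hj: "h * j \<notin> \<sigma> ` P"
  shows "res_dim act P (wspace act P) = res_dim act (\<sigma> ` P) (wspace act (\<sigma> ` P))"
proof -
  have \<sigma>P: "is_max_ideal (\<sigma> ` P)" by (rule ring_aut_image_max_ideal[OF aut P])
  define S where "S = (SOME S. res_basis act P (wspace act P) S)"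
  define T where "T = (SOME T. res_basis act (\<sigma> ` P) (wspace act (\<sigma> ` P)) T)"
  have S: "res_basis act P (wspace act P) S" and T: "res_basis act (\<sigma> ` P) (wspace act (\<sigma> ` P)) T"
    unfolding S_def T_def using weight P \<sigma>P
    by (auto simp: is_weight_module_def intro: res_fin_dim_some_basis)
  have "card S \<le> card T"
  proof (rule res_basis_card_le_if_semilinear_inj[OF module_ract \<sigma>P S T
        additive_act[OF tmono_J_mem[OF j]] _ inj_on_act_J[OF P h j hj]])
    show "act (tmono j 1) ` wspace act P \<subseteq> wspace act (\<sigma> ` P)"
      using act_J_wspace[OF j] by blast
    show "\<forall>r. \<forall>v\<in>wspace act P. act (tmono j 1) (ract act r v) = ract act (\<sigma> r) (act (tmono j 1) v)"
      using act_J_ract[OF j] by blast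
  qed (use ring_aut_bij[OF aut] bij_is_surj in auto)
  moreover have "card T \<le> card S"
  proof (rule res_basis_card_le_if_semilinear_inj[OF module_ract P T S
        additive_act[OF tmono_H_mem[OF h]] _ inj_on_act_H[OF \<sigma>P h j]])
    show "j * h \<notin> \<sigma> ` P" using hj by (simp add: mult.commute)
    show "act (tmono (inv \<sigma> h) (-1)) ` wspace act (\<sigma> ` P) \<subseteq> wspace act P"
      using act_H_wspace[OF h] by blast
    show "\<forall>r. \<forall>v\<in>wspace act (\<sigma> ` P). act (tmono (inv \<sigma> h) (-1)) (ract act r v)
        = ract act (inv \<sigma> r) (act (tmono (inv \<sigma> h) (-1)) v)"
      using act_H_ract[OF h] by blast
    show "surj (inv \<sigma>)" using ring_aut_bij[OF aut] by (simp add: bij_is_surj bij_imp_bij_inv)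
    show "inv \<sigma> ` \<sigma> ` P \<subseteq> P" using ring_aut_inv_apply[OF aut] by (simp add: image_image)
  qed
  ultimately show ?thesis by (simp add: res_dim_def S_def T_def)
qed

end

theorem proposition3p1:
  fixes \<sigma> :: "'r::idom \<Rightarrow> 'r"
    and H J :: "'r set"
    and act :: "(int \<Rightarrow> 'r) \<Rightarrow> 'm::ab_group_add \<Rightarrow> 'm"
    and m :: "'r set"
  assumes aut: "is_ring_aut \<sigma>"
    and H: "is_ideal H" and J: "is_ideal J"
    and nonzero: "\<forall>n. Iseq \<sigma> H J n \<noteq> {0}"
    and module: "is_B_module \<sigma> H J act"
    and weight: "is_weight_module act"
    and m: "is_max_ideal m"
    and notS: "\<sigma> ` m \<notin> SB H J"
  shows "(\<forall>j\<in>J - \<sigma> ` m.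
            act (tmono j 1) ` wspace act m \<subseteq> wspace act (\<sigma> ` m) \<and>
            inj_on (act (tmono j 1)) (wspace act m)) \<and>
         (\<forall>h\<in>H - \<sigma> ` m.
            act (tmono (inv \<sigma> h) (-1)) ` wspace act (\<sigma> ` m) \<subseteq> wspace act m \<and>
            inj_on (act (tmono (inv \<sigma> h) (-1))) (wspace act (\<sigma> ` m))) \<and>
         res_dim act m (wspace act m) = res_dim act (\<sigma> ` m) (wspace act (\<sigma> ` m))"
proof -
  interpret BR_module \<sigma> H J act using aut H J module by unfold_locales
  have \<sigma>m: "is_max_ideal (\<sigma> ` m)" by (rule ring_aut_image_max_ideal[OF aut m])
  then have prime: "is_prime_ideal (\<sigma> ` m)" by (rule max_ideal_is_prime)
  obtain h0 j0 where h0: "h0 \<in> H" and j0: "j0 \<in> J" and h0j0: "h0 * j0 \<notin> \<sigma> ` m"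
    using prime_ideal_notin_SB[OF prime notS] by blast
  have "is_ideal (\<sigma> ` m)" using \<sigma>m by (simp add: is_max_ideal_def)
  then have "h0 \<notin> \<sigma> ` m" "j0 \<notin> \<sigma> ` m"
    using h0j0 ideal_mult_left ideal_mult_right by blast+
  then have h0j: "h0 * j \<notin> \<sigma> ` m" if "j \<notin> \<sigma> ` m" for j
    using that prime_ideal_mult_notin[OF prime] by blast
  have j0h: "j0 * h \<notin> \<sigma> ` m" if "h \<notin> \<sigma> ` m" for h
    using that \<open>j0 \<notin> \<sigma> ` m\<close> prime_ideal_mult_notin[OF prime] by blast
  have "act (tmono j 1) ` wspace act m \<subseteq> wspace act (\<sigma> ` m) \<and>
      inj_on (act (tmono j 1)) (wspace act m)" if "j \<in> J - \<sigma> ` m" for j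
    using act_J_wspace inj_on_act_J[OF m h0 _ h0j] that by blast
  moreover have "act (tmono (inv \<sigma> h) (-1)) ` wspace act (\<sigma> ` m) \<subseteq> wspace act m \<and>
      inj_on (act (tmono (inv \<sigma> h) (-1))) (wspace act (\<sigma> ` m))" if "h \<in> H - \<sigma> ` m" for h
    using act_H_wspace inj_on_act_H[OF \<sigma>m _ j0 j0h] that by blast
  ultimately show ?thesis
    using res_dim_eq_res_dim_shift[OF weight m h0 j0 h0j0] by blast
qed

end
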